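(* Assume $\mathfrak g$ is noncompact and has no nonzero proper $\sigma$-stable ideals. If $Y\in\mathfrak t^+$, then $|\alpha(Y)|<\pi$ for all $\alpha\in\Sigma$.
   Context: Let $G$ be a connected real semisimple Lie group with Lie algebra $\mathfrak g$. Let $\sigma$ be an involution of $G$ and $\theta$ a Cartan involution with $\sigma\theta=\theta\sigma$; the same letters denote the induced involutions of $\mathfrak g$. Let $\mathfrak g=\mathfrak k\oplus\mathfrak m$ and $\mathfrak g=\mathfrak h\oplus\mathfrak q$ be the $\pm1$-eigenspace decompositions for $\theta$ and $\sigma$. Let $\mathfrak t$ be a maximal abelian subspace of $\mathfrak k\cap\mathfrak q$. For a linear form $\alpha:\mathfrak t\to i\mathbb R$ put - $\mathfrak g_\mathbb C(\mathfrak t,\alpha)=\{X\in\mathfrak g_\mathbb C\mid[Y,X]=\alpha(Y)X\ \forall Y\in\mathfrak t\}$, - $\mathfrak m_\mathbb C(\mathfrak t,\alpha)=\mathfrak g_\mathbb C(\mathfrak t,\alpha)\cap\mathfrak m_\mathbb C$. Let $\Sigma=\{\alpha\neq0\mid\mathfrak g_\mathbb C(\mathfrak t,\alpha)\ne\{0\}\}$ and $\Sigma(\mathfrak m_\mathbb C,\mathfrak t)=\{\alpha\ne0\mid\mathfrak m_\mathbb C(\mathfrak t,\alpha)\ne\{0\}\}$. Put $\mathfrak t^+=\{Y\in\mathfrak t\mid|\alpha(Y)|<\pi/2\ \forall\alpha\in\Sigma(\mathfrak m_\mathbb C,\mathfrak t)\}$. *)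

theory Defs
  imports "HOL-Analysis.Analysis"
begin

text \<open>A finite-dimensional real Lie algebra is modelled as the whole of a type
  'a :: euclidean_space equipped with a bracket br.\<close>

definition lie_algebra :: "('a::euclidean_space \<Rightarrow> 'a \<Rightarrow> 'a) \<Rightarrow> bool" where
  "lie_algebra br \<longleftrightarrow> bilinear br \<and> (\<forall>x. br x x = 0) \<and>
     (\<forall>x y z. br x (br y z) + br y (br z x) + br z (br x y) = 0)"

definition ltrace :: "('a::euclidean_space \<Rightarrow> 'a) \<Rightarrow> real" where
  "ltrace f = (\<Sum>b\<in>Basis. inner (f b) b)"

definition killing :: "('a::euclidean_space \<Rightarrow> 'a \<Rightarrow> 'a) \<Rightarrow> 'a \<Rightarrow> 'a \<Rightarrow> real" where
  "killing br X Y = ltrace (\<lambda>Z. br X (br Y Z))"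

text \<open>Semisimple: Killing form nondegenerate (Cartan's criterion, Helgason's definition).\<close>
definition semisimple :: "('a::euclidean_space \<Rightarrow> 'a \<Rightarrow> 'a) \<Rightarrow> bool" where
  "semisimple br \<longleftrightarrow> lie_algebra br \<and> (\<forall>X. (\<forall>Y. killing br X Y = 0) \<longrightarrow> X = 0)"

definition compact_lie :: "('a::euclidean_space \<Rightarrow> 'a \<Rightarrow> 'a) \<Rightarrow> bool" where
  "compact_lie br \<longleftrightarrow> (\<forall>X. X \<noteq> 0 \<longrightarrow> killing br X X < 0)"

definition lie_automorphism :: "('a::euclidean_space \<Rightarrow> 'a \<Rightarrow> 'a) \<Rightarrow> ('a \<Rightarrow> 'a) \<Rightarrow> bool" where
  "lie_automorphism br f \<longleftrightarrow> linear f \<and> bij f \<and> (\<forall>X Y. f (br X Y) = br (f X) (f Y))"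

definition lie_involution :: "('a::euclidean_space \<Rightarrow> 'a \<Rightarrow> 'a) \<Rightarrow> ('a \<Rightarrow> 'a) \<Rightarrow> bool" where
  "lie_involution br f \<longleftrightarrow> lie_automorphism br f \<and> (\<forall>X. f (f X) = X)"

definition cartan_involution :: "('a::euclidean_space \<Rightarrow> 'a \<Rightarrow> 'a) \<Rightarrow> ('a \<Rightarrow> 'a) \<Rightarrow> bool" where
  "cartan_involution br \<theta> \<longleftrightarrow> lie_involution br \<theta> \<and>
     (\<forall>X. X \<noteq> 0 \<longrightarrow> - killing br X (\<theta> X) > 0)"

definition lie_ideal :: "('a::euclidean_space \<Rightarrow> 'a \<Rightarrow> 'a) \<Rightarrow> 'a set \<Rightarrow> bool" where
  "lie_ideal br I \<longleftrightarrow> subspace I \<and> (\<forall>X\<in>I. \<forall>Y. br Y X \<in> I)"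

definition eigsp :: "('a::real_vector \<Rightarrow> 'a) \<Rightarrow> real \<Rightarrow> 'a set" where
  "eigsp f c = {X. f X = c *\<^sub>R X}"

definition abelian_sub :: "('a::euclidean_space \<Rightarrow> 'a \<Rightarrow> 'a) \<Rightarrow> 'a set \<Rightarrow> bool" where
  "abelian_sub br S \<longleftrightarrow> subspace S \<and> (\<forall>X\<in>S. \<forall>Y\<in>S. br X Y = 0)"

definition max_abelian_in :: "('a::euclidean_space \<Rightarrow> 'a \<Rightarrow> 'a) \<Rightarrow> 'a set \<Rightarrow> 'a set \<Rightarrow> bool" where
  "max_abelian_in br t V \<longleftrightarrow> abelian_sub br t \<and> t \<subseteq> V \<and>
     (\<forall>s. abelian_sub br s \<and> t \<subseteq> s \<and> s \<subseteq> V \<longrightarrow> s = t)"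

text \<open>An element X1 + i X2 of g_C is represented by the pair
  (X1, X2); a linear form alpha : t \<rightarrow> i R is represented as alpha = i beta with beta
  a real linear functional (only its restriction to t matters).
  [Y, X1 + i X2] = i beta(Y) (X1 + i X2) unfolds to
  [Y,X1] = -beta(Y) X2 and [Y,X2] = beta(Y) X1.\<close>
definition root_space_C :: "('a::euclidean_space \<Rightarrow> 'a \<Rightarrow> 'a) \<Rightarrow> 'a set \<Rightarrow> ('a \<Rightarrow> real) \<Rightarrow> ('a \<times> 'a) set" where
  "root_space_C br t \<beta> = {(X1, X2). \<forall>Y\<in>t. br Y X1 = - (\<beta> Y) *\<^sub>R X2 \<and> br Y X2 = \<beta> Y *\<^sub>R X1}"

definition roots :: "('a::euclidean_space \<Rightarrow> 'a \<Rightarrow> 'a) \<Rightarrow> 'a set \<Rightarrow> ('a \<Rightarrow> real) set" where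
  "roots br t = {\<beta>. linear \<beta> \<and> (\<exists>Y\<in>t. \<beta> Y \<noteq> 0) \<and> root_space_C br t \<beta> \<noteq> {(0, 0)}}"

definition roots_m :: "('a::euclidean_space \<Rightarrow> 'a \<Rightarrow> 'a) \<Rightarrow> 'a set \<Rightarrow> 'a set \<Rightarrow> ('a \<Rightarrow> real) set" where
  "roots_m br t m = {\<beta>. linear \<beta> \<and> (\<exists>Y\<in>t. \<beta> Y \<noteq> 0) \<and>
       root_space_C br t \<beta> \<inter> (m \<times> m) \<noteq> {(0, 0)}}"

text \<open>t^+ = {Y in t. |alpha(Y)| < pi/2 for all alpha in Sigma(m_C,t)}; note |alpha(Y)| = |beta(Y)|.\<close>
definition t_plus :: "('a::euclidean_space \<Rightarrow> 'a \<Rightarrow> 'a) \<Rightarrow> 'a set \<Rightarrow> 'a set \<Rightarrow> 'a set" where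
  "t_plus br t m = {Y\<in>t. \<forall>\<beta>\<in>roots_m br t m. \<bar>\<beta> Y\<bar> < pi / 2}"

end

theory Submission
  imports Defs
begin

text \<open>
  A root vector of \<open>\<beta>\<close> splits into its \<open>\<theta>\<close>-components, which are again root vectors. If
  the \<open>m\<close>-component is nonzero, then \<open>\<beta> \<in> \<Sigma>(m\<^sub>C, t)\<close> and \<open>|\<beta>(Y)| < \<pi>/2\<close>.
  Otherwise there is \<open>z \<noteq> 0\<close> in \<open>k\<close> with \<open>ad(Y)\<^sup>2 z = -\<beta>(Y)\<^sup>2 z\<close>.

  The operator \<open>ad(Y)\<^sup>2\<close> preserves \<open>m\<close> and is symmetric for the inner product
  \<open>B\<^sub>\<theta>(X, Z) = -B(X, \<theta> Z)\<close>, so \<open>m\<close> is spanned by its eigenvectors. Diagonalizing the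
  commuting family \<open>ad(Z) ad(Y)\<close>, \<open>Z \<in> t\<close>, on an eigenspace produces a root in
  \<open>\<Sigma>(m\<^sub>C, t)\<close>; hence the eigenvalues are \<open>-u\<^sup>2\<close> with \<open>0 \<le> u < \<pi>/2\<close>. For eigenvectors
  \<open>x, y\<close> with eigenvalues \<open>-u\<^sup>2, -v\<^sup>2\<close> the bracket \<open>[x, y]\<close> is annihilated by
  \<open>(ad(Y)\<^sup>2 + (u + v)\<^sup>2)(ad(Y)\<^sup>2 + (u - v)\<^sup>2)\<close>; pairing with \<open>z\<close> shows that
  \<open>\<beta>(Y)\<^sup>2 \<ge> \<pi>\<^sup>2\<close> would make \<open>z\<close> orthogonal to all these brackets. Irreducibility and
  noncompactness force \<open>k = [m, m]\<close>, so \<open>z\<close> would be orthogonal to itself.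
\<close>

section \<open>Positive definite forms and simultaneous diagonalization\<close>

lemma linear_coeff_eq_0_if_quadratic_nonneg:
  fixes a Q :: real
  assumes "\<And>e. 0 \<le> 2 * e * a + e * e * Q"
  shows "a = 0"
proof (rule ccontr)
  assume "a \<noteq> 0"
  define c where "c = \<bar>Q\<bar> + 1"
  have c: "c > 0" "Q < 2 * c" unfolding c_def by (auto simp: abs_if)
  have "0 \<le> c * c * (2 * (- a / c) * a + (- a / c) * (- a / c) * Q)"
    using assms[of "- a / c"] c by simp
  also have "\<dots> = a * a * (Q - 2 * c)"
    using c by (simp add: field_simps)
  also have "\<dots> < 0"
    using \<open>a \<noteq> 0\<close> c by (intro mult_pos_neg) (auto simp: zero_less_mult_iff linorder_neq_iff)
  finally show False by simp
qed

definition common_eigenvectors :: "('a::real_vector \<Rightarrow> 'a) set \<Rightarrow> 'a set \<Rightarrow> 'a set" where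
  "common_eigenvectors F V = {x\<in>V. \<forall>S\<in>F. \<exists>c. S x = c *\<^sub>R x}"

lemma dim_less_if_proper_subspace:
  fixes U V :: "'a::euclidean_space set"
  assumes "subspace U" "subspace V" "U \<subseteq> V" "U \<noteq> V"
  shows "dim U < dim V"
proof -
  have eqs: "span U = U" "span V = V" using assms(1,2) by simp_all
  have "span U \<subset> span V" unfolding eqs using assms(3,4) by blast
  then show ?thesis by (rule dim_psubset)
qed

lemma linear_image_span_subset:
  assumes "linear f" "f ` S \<subseteq> span T"
  shows "f ` span S \<subseteq> span T"
  using span_minimal[OF assms(2) subspace_span] span_linear_image[OF assms(1)] by simp

locale pos_def_form =
  fixes g :: "'a::euclidean_space \<Rightarrow> 'a \<Rightarrow> real"
  assumes bilinear: "bilinear g"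
    and symmetric: "g x y = g y x"
    and pos: "x \<noteq> 0 \<Longrightarrow> g x x > 0"
begin

lemmas form_simps = bilinear_ladd[OF bilinear] bilinear_radd[OF bilinear]
  bilinear_lsub[OF bilinear] bilinear_rsub[OF bilinear]
  bilinear_lmul[OF bilinear, simplified] bilinear_rmul[OF bilinear, simplified]
  bilinear_lneg[OF bilinear] bilinear_rneg[OF bilinear]
  bilinear_lzero[OF bilinear] bilinear_rzero[OF bilinear]

lemma nonneg: "g x x \<ge> 0"
  by (cases "x = 0") (simp_all add: form_simps less_imp_le pos)

definition self_adjoint_on :: "'a set \<Rightarrow> ('a \<Rightarrow> 'a) \<Rightarrow> bool" where
  "self_adjoint_on V S \<longleftrightarrow> linear S \<and> S ` V \<subseteq> V \<and> (\<forall>x\<in>V. \<forall>y\<in>V. g (S x) y = g x (S y))"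

lemma self_adjoint_on_subset:
  "self_adjoint_on V S \<Longrightarrow> U \<subseteq> V \<Longrightarrow> S ` U \<subseteq> U \<Longrightarrow> self_adjoint_on U S"
  unfolding self_adjoint_on_def by blast

lemma rayleigh_quotient_attains_max:
  assumes V: "subspace V" and nz: "V \<noteq> {0}" and S: "linear S"
  obtains x0 M where "x0 \<in> V" "x0 \<noteq> 0" "g (S x0) x0 = M * g x0 x0"
    "\<And>y. y \<in> V \<Longrightarrow> g (S y) y \<le> M * g y y"
proof -
  define K where "K = sphere 0 1 \<inter> V"
  define R where "R x = g (S x) x / g x x" for x
  have "compact K"
    unfolding K_def by (rule compact_Int_closed[OF compact_sphere closed_subspace[OF V]])
  obtain v where v: "v \<in> V" "v \<noteq> 0" using nz subspace_0[OF V] by blast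
  then have "(1 / norm v) *\<^sub>R v \<in> K" unfolding K_def using subspace_scale[OF V] by auto
  then have "K \<noteq> {}" by blast
  have "continuous_on K S"
    using S linear_conv_bounded_linear linear_continuous_on by blast
  moreover have "g x x \<noteq> 0" if "x \<in> K" for x
    using that pos[of x] unfolding K_def by fastforce
  ultimately have "continuous_on K R"
    unfolding R_def
    by (auto intro!: continuous_on_divide bilinear_continuous_on_compose[OF _ _ bilinear] continuous_on_id)
  then obtain x0 where x0: "x0 \<in> K" and max: "\<And>y. y \<in> K \<Longrightarrow> R y \<le> R x0"
    using continuous_attains_sup[OF \<open>compact K\<close> \<open>K \<noteq> {}\<close>] by blast
  have x0V: "x0 \<in> V" and x0nz: "x0 \<noteq> 0" using x0 unfolding K_def by auto
  have "g (S y) y \<le> R x0 * g y y" if y: "y \<in> V" for y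
  proof (cases "y = 0")
    case True
    then show ?thesis by (simp add: form_simps linear_0[OF S])
  next
    case False
    define c where "c = 1 / norm y"
    have "c *\<^sub>R y \<in> K" unfolding K_def c_def using y False subspace_scale[OF V] by auto
    moreover have "R (c *\<^sub>R y) = R y"
      unfolding R_def c_def using False by (simp add: linear_scale[OF S] form_simps)
    ultimately have "g (S y) y / g y y \<le> R x0" using max unfolding R_def by metis
    then show ?thesis using pos[OF False] by (simp add: divide_le_eq)
  qed
  moreover have "g (S x0) x0 = R x0 * g x0 x0" unfolding R_def using pos[OF x0nz] by simp
  ultimately show thesis using that x0V x0nz by blast
qed

text \<open>The quadratic form \<open>y \<mapsto> M g(y,y) - g(S y, y)\<close> is nonnegative on V and vanishes
  at \<open>x0\<close>, so its derivative at \<open>x0\<close> in the direction \<open>w = M x0 - S x0\<close>, namely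
  \<open>2 g(w, w)\<close>, vanishes.\<close>
lemma eigenvector_if_rayleigh_max:
  assumes V: "subspace V" and S: "self_adjoint_on V S" and x0V: "x0 \<in> V"
    and max: "\<And>y. y \<in> V \<Longrightarrow> g (S y) y \<le> M * g y y" and x0M: "g (S x0) x0 = M * g x0 x0"
  shows "S x0 = M *\<^sub>R x0"
proof -
  have Slin: "linear S" and SV: "S ` V \<subseteq> V"
    and Ssym: "\<And>x y. x \<in> V \<Longrightarrow> y \<in> V \<Longrightarrow> g (S x) y = g x (S y)"
    using S unfolding self_adjoint_on_def by auto
  define w where "w = M *\<^sub>R x0 - S x0"
  have wV: "w \<in> V" unfolding w_def using subspace_diff[OF V] subspace_scale[OF V] x0V SV by blast
  have gww: "g w w = M * g x0 w - g w (S x0)"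
    unfolding w_def by (simp add: form_simps algebra_simps symmetric[of "S x0" x0])
  have "0 \<le> 2 * e * g w w + e * e * (M * g w w - g (S w) w)" for e
  proof -
    have "x0 + e *\<^sub>R w \<in> V" using subspace_add[OF V] subspace_scale[OF V] x0V wV by blast
    then have "g (S (x0 + e *\<^sub>R w)) (x0 + e *\<^sub>R w) \<le> M * g (x0 + e *\<^sub>R w) (x0 + e *\<^sub>R w)"
      by (rule max)
    then have "g (S x0) x0 + e * g (S x0) w + e * g (S w) x0 + e * e * g (S w) w
        \<le> M * (g x0 x0 + e * g x0 w + e * g w x0 + e * e * g w w)"
      by (simp add: linear_add[OF Slin] linear_scale[OF Slin] form_simps algebra_simps)
    moreover have "M * (g x0 x0 + e * g x0 w + e * g w x0 + e * e * g w w)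
        - (g (S x0) x0 + e * g (S x0) w + e * g (S w) x0 + e * e * g (S w) w)
        = 2 * e * g w w + e * e * (M * g w w - g (S w) w)"
    proof -
      have "g w x0 = g x0 w" "g (S x0) w = g w (S x0)" "g (S w) x0 = g w (S x0)"
        using symmetric Ssym wV x0V by auto
      then show ?thesis unfolding gww x0M by (simp add: algebra_simps)
    qed
    ultimately show ?thesis by linarith
  qed
  then have "g w w = 0" by (rule linear_coeff_eq_0_if_quadratic_nonneg)
  then have "w = 0" using pos by force
  then show ?thesis unfolding w_def by simp
qed

lemma self_adjoint_eigenvector:
  assumes "subspace V" "V \<noteq> {0}" "self_adjoint_on V S"
  shows "\<exists>x\<in>V. x \<noteq> 0 \<and> (\<exists>c. S x = c *\<^sub>R x)"
proof -
  have "linear S" using assms(3) unfolding self_adjoint_on_def by simp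
  then obtain x0 M where "x0 \<in> V" "x0 \<noteq> 0" "g (S x0) x0 = M * g x0 x0"
    "\<And>y. y \<in> V \<Longrightarrow> g (S y) y \<le> M * g y y"
    using rayleigh_quotient_attains_max assms(1,2) by metis
  then show ?thesis using eigenvector_if_rayleigh_max[OF assms(1,3)] by blast
qed

lemma common_eigenvector_exists:
  assumes comm: "\<And>S T x. S \<in> F \<Longrightarrow> T \<in> F \<Longrightarrow> S (T x) = T (S x)"
  shows "subspace V \<Longrightarrow> V \<noteq> {0} \<Longrightarrow> (\<And>S. S \<in> F \<Longrightarrow> self_adjoint_on V S)
    \<Longrightarrow> \<exists>x\<in>common_eigenvectors F V. x \<noteq> 0"
proof (induction "dim V" arbitrary: V rule: less_induct)
  case less
  note V = less.prems(1) and nz = less.prems(2) and sa = less.prems(3)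
  show ?case
  proof (cases "\<forall>S\<in>F. \<exists>c. \<forall>x\<in>V. S x = c *\<^sub>R x")
    case True
    obtain v where "v \<in> V" "v \<noteq> 0" using nz subspace_0[OF V] by blast
    then show ?thesis using True unfolding common_eigenvectors_def by blast
  next
    case False
    then obtain S where SF: "S \<in> F" and nonscalar: "\<not> (\<exists>c. \<forall>x\<in>V. S x = c *\<^sub>R x)" by blast
    have Slin: "linear S" using sa[OF SF] unfolding self_adjoint_on_def by simp
    obtain x s where xV: "x \<in> V" and xnz: "x \<noteq> 0" and xs: "S x = s *\<^sub>R x"
      using self_adjoint_eigenvector[OF V nz sa[OF SF]] by blast
    define V1 where "V1 = {v\<in>V. S v = s *\<^sub>R v}"
    have V1: "subspace V1"
      unfolding V1_def subspace_def using subspace_0[OF V] subspace_add[OF V] subspace_scale[OF V]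
      by (auto simp: linear_0[OF Slin] linear_add[OF Slin] linear_scale[OF Slin] scaleR_add_right)
    have sub: "V1 \<subseteq> V" and ne: "V1 \<noteq> V" using nonscalar unfolding V1_def by blast+
    have "T ` V1 \<subseteq> V1" if "T \<in> F" for T
      using sa[OF that] comm[OF SF that] unfolding V1_def self_adjoint_on_def
      by (auto simp: linear_scale)
    then have "self_adjoint_on V1 T" if "T \<in> F" for T
      using self_adjoint_on_subset[OF sa sub] that by blast
    moreover have "V1 \<noteq> {0}" using xV xnz xs unfolding V1_def by blast
    ultimately obtain y where "y \<in> common_eigenvectors F V1" "y \<noteq> 0"
      using less.hyps[OF dim_less_if_proper_subspace[OF V1 V sub ne] V1] by blast
    then show ?thesis using sub unfolding common_eigenvectors_def by blast
  qed
qed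

lemma subspace_orthogonal_in: "subspace V \<Longrightarrow> subspace {v\<in>V. g x v = 0}"
  unfolding subspace_def by (auto simp: form_simps)

lemma orthogonal_in_invariant:
  assumes "self_adjoint_on V S" "x \<in> V" "S x = c *\<^sub>R x"
  shows "S ` {v\<in>V. g x v = 0} \<subseteq> {v\<in>V. g x v = 0}"
proof (rule image_subsetI)
  fix y assume y: "y \<in> {v\<in>V. g x v = 0}"
  have "g x (S y) = g (S x) y" using assms(1,2) y unfolding self_adjoint_on_def by auto
  also have "\<dots> = 0" using assms(3) y by (simp add: form_simps)
  finally show "S y \<in> {v\<in>V. g x v = 0}" using assms(1) y unfolding self_adjoint_on_def by auto
qed

lemma orthogonal_projection_in:
  assumes "subspace V" "x \<in> V" "x \<noteq> 0" "v \<in> V"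
  shows "v - (g x v / g x x) *\<^sub>R x \<in> {v\<in>V. g x v = 0}"
proof -
  have "v - (g x v / g x x) *\<^sub>R x \<in> V" using assms by (simp add: subspace_diff subspace_scale)
  moreover have "g x (v - (g x v / g x x) *\<^sub>R x) = 0" using pos[OF assms(3)] by (simp add: form_simps)
  ultimately show ?thesis by simp
qed

lemma subspace_subset_span_common_eigenvectors:
  assumes comm: "\<And>S T x. S \<in> F \<Longrightarrow> T \<in> F \<Longrightarrow> S (T x) = T (S x)"
  shows "subspace V \<Longrightarrow> (\<And>S. S \<in> F \<Longrightarrow> self_adjoint_on V S)
    \<Longrightarrow> V \<subseteq> span (common_eigenvectors F V)"
proof (induction "dim V" arbitrary: V rule: less_induct)
  case less
  note V = less.prems(1) and sa = less.prems(2)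
  show ?case
  proof (cases "V = {0}")
    case True
    then show ?thesis using span_zero by blast
  next
    case False
    obtain x where x: "x \<in> common_eigenvectors F V" and xnz: "x \<noteq> 0"
      using common_eigenvector_exists[of F V] comm V False sa by blast
    have xV: "x \<in> V" using x unfolding common_eigenvectors_def by simp
    define V1 where "V1 = {v\<in>V. g x v = 0}"
    have V1: "subspace V1" unfolding V1_def using V by (rule subspace_orthogonal_in)
    have sub: "V1 \<subseteq> V" unfolding V1_def by auto
    have ne: "V1 \<noteq> V" using xV pos[OF xnz] unfolding V1_def by force
    have "self_adjoint_on V1 T" if T: "T \<in> F" for T
      using x T orthogonal_in_invariant[OF sa[OF T] xV] self_adjoint_on_subset[OF sa[OF T] sub]
      unfolding V1_def common_eigenvectors_def by blast
    then have IH: "V1 \<subseteq> span (common_eigenvectors F V1)"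
      using less.hyps[OF dim_less_if_proper_subspace[OF V1 V sub ne] V1] by blast
    have mono: "span (common_eigenvectors F V1) \<subseteq> span (common_eigenvectors F V)"
      by (rule span_mono) (use sub in \<open>auto simp: common_eigenvectors_def\<close>)
    show ?thesis
    proof
      fix v assume "v \<in> V"
      define c where "c = g x v / g x x"
      have "v - c *\<^sub>R x \<in> span (common_eigenvectors F V)"
        using orthogonal_projection_in[OF V xV xnz \<open>v \<in> V\<close>] IH mono unfolding V1_def c_def by blast
      moreover have "c *\<^sub>R x \<in> span (common_eigenvectors F V)"
        using x by (intro span_scale span_base)
      ultimately have "(v - c *\<^sub>R x) + c *\<^sub>R x \<in> span (common_eigenvectors F V)"
        by (rule span_add)
      then show "v \<in> span (common_eigenvectors F V)" by simp
    qed
  qed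
qed

end

section \<open>Traces, Lie algebras and the Killing form\<close>

lemma ltrace_compose_expand:
  assumes f: "linear f"
  shows "ltrace (\<lambda>x. f (h x)) = (\<Sum>b\<in>Basis. \<Sum>c\<in>Basis. (h b \<bullet> c) * (f c \<bullet> b))"
proof -
  have "f (h b) = (\<Sum>c\<in>Basis. (h b \<bullet> c) *\<^sub>R f c)" for b
    by (subst euclidean_representation[symmetric, of "h b"])
      (simp add: linear_sum[OF f] linear_scale[OF f])
  then show ?thesis unfolding ltrace_def by (simp add: inner_sum_left)
qed

lemma ltrace_compose_commute:
  assumes "linear f" "linear h"
  shows "ltrace (\<lambda>x. f (h x)) = ltrace (\<lambda>x. h (f x))"
  unfolding ltrace_compose_expand[OF assms(1)] ltrace_compose_expand[OF assms(2)]
  by (subst sum.swap) (simp add: mult.commute)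

lemma ltrace_add: "ltrace (\<lambda>x. f x + h x) = ltrace f + ltrace h"
  unfolding ltrace_def by (simp add: inner_add_left sum.distrib)

lemma ltrace_diff: "ltrace (\<lambda>x. f x - h x) = ltrace f - ltrace h"
  unfolding ltrace_def by (simp add: inner_diff_left sum_subtractf)

lemma ltrace_scale: "ltrace (\<lambda>x. c *\<^sub>R f x) = c * ltrace f"
  unfolding ltrace_def by (simp add: sum_distrib_left)

locale lie =
  fixes br :: "'a::euclidean_space \<Rightarrow> 'a \<Rightarrow> 'a"
  assumes lie_algebra: "lie_algebra br"
begin

lemma bilinear_bracket: "bilinear br"
  using lie_algebra unfolding lie_algebra_def by simp

lemma linear_ad: "linear (br X)"
  using bilinear_bracket unfolding bilinear_def by simp

lemma linear_bracket_left: "linear (\<lambda>X. br X Y)"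
  using bilinear_bracket unfolding bilinear_def by simp

lemmas bracket_simps = bilinear_ladd[OF bilinear_bracket] bilinear_radd[OF bilinear_bracket]
  bilinear_lsub[OF bilinear_bracket] bilinear_rsub[OF bilinear_bracket]
  bilinear_lmul[OF bilinear_bracket] bilinear_rmul[OF bilinear_bracket]
  bilinear_lneg[OF bilinear_bracket] bilinear_rneg[OF bilinear_bracket]
  bilinear_lzero[OF bilinear_bracket] bilinear_rzero[OF bilinear_bracket]

lemma bracket_self: "br x x = 0"
  using lie_algebra unfolding lie_algebra_def by simp

lemma bracket_antisym: "br x y = - br y x"
proof -
  have "0 = br (x + y) (x + y)" by (simp only: bracket_self)
  also have "\<dots> = br x y + br y x" by (simp add: bracket_simps) (simp add: bracket_self)
  finally have "br x y + br y x = 0" by (rule sym)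
  then show ?thesis by (simp add: eq_neg_iff_add_eq_0)
qed

lemma ad_bracket: "br X (br Y Z) = br (br X Y) Z + br Y (br X Z)"
proof -
  have "br X (br Y Z) + br Y (br Z X) + br Z (br X Y) = 0"
    using lie_algebra unfolding lie_algebra_def by simp
  then show ?thesis
    using bracket_antisym[of Z X] bracket_antisym[of Z "br X Y"] by (simp add: bracket_simps algebra_simps)
qed

lemma ad_commute: "br X Y = 0 \<Longrightarrow> br X (br Y Z) = br Y (br X Z)"
  using ad_bracket[of X Y Z] by (simp add: bracket_simps)

lemma ad_sq_bracket:
  "br Y (br Y (br u v)) = br (br Y (br Y u)) v + 2 *\<^sub>R br (br Y u) (br Y v) + br u (br Y (br Y v))"
proof -
  have "br Y (br Y (br u v))
      = br (br Y (br Y u)) v + br (br Y u) (br Y v) + (br (br Y u) (br Y v) + br u (br Y (br Y v)))"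
    by (simp only: ad_bracket[of Y u v] bracket_simps ad_bracket[of Y "br Y u" v] ad_bracket[of Y u "br Y v"])
  then show ?thesis by (simp add: scaleR_2)
qed

text \<open>On the span of \<open>w\<close> and \<open>d = [ad(Y) x, ad(Y) y]\<close> the operator \<open>ad(Y)\<^sup>2\<close> acts by
  \<open>w \<mapsto> -(p + q) w + 2 d\<close>, \<open>d \<mapsto> 2 p q w - (p + q) d\<close>; the polynomial is the characteristic
  polynomial of this matrix.\<close>
lemma ad_sq_bracket_of_eigenvectors:
  assumes x: "br Y (br Y x) = (- p) *\<^sub>R x" and y: "br Y (br Y y) = (- q) *\<^sub>R y"
  defines "w \<equiv> br x y"
  shows "br Y (br Y (br Y (br Y w))) + (2 * (p + q)) *\<^sub>R br Y (br Y w) + ((p - q) * (p - q)) *\<^sub>R w = 0"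
proof -
  define d where "d = br (br Y x) (br Y y)"
  have x3: "br Y (br Y (br Y x)) = (- p) *\<^sub>R br Y x" using x by (simp add: bracket_simps)
  have y3: "br Y (br Y (br Y y)) = (- q) *\<^sub>R br Y y" using y by (simp add: bracket_simps)
  have w2: "br Y (br Y w) = (- (p + q)) *\<^sub>R w + 2 *\<^sub>R d"
    unfolding w_def d_def ad_sq_bracket[of Y x y] x y by (simp add: bracket_simps algebra_simps)
  have d2: "br Y (br Y d) = (- (p + q)) *\<^sub>R d + (2 * p * q) *\<^sub>R w"
    unfolding w_def d_def ad_sq_bracket[of Y "br Y x"] x y x3 y3
    by (simp add: bracket_simps algebra_simps)
  have w4: "br Y (br Y (br Y (br Y w)))
      = (- (p + q)) *\<^sub>R ((- (p + q)) *\<^sub>R w + 2 *\<^sub>R d) + 2 *\<^sub>R ((- (p + q)) *\<^sub>R d + (2 * p * q) *\<^sub>R w)"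
    by (simp only: w2 d2 bracket_simps)
  show ?thesis unfolding w4 unfolding w2 by (simp add: algebra_simps flip: scaleR_add_left)
qed

lemma bracket_in_span_brackets:
  assumes "a \<in> span A" "b \<in> span B"
  shows "br a b \<in> span {br x y |x y. x \<in> A \<and> y \<in> B}"
proof -
  let ?Q = "{br x y |x y. x \<in> A \<and> y \<in> B}"
  have "br x ` span B \<subseteq> span ?Q" if "x \<in> A" for x
    using that by (intro linear_image_span_subset[OF linear_ad]) (auto intro: span_base)
  then have "(\<lambda>X. br X b) ` span A \<subseteq> span ?Q"
    using assms(2) by (intro linear_image_span_subset[OF linear_bracket_left]) blast
  then show ?thesis using assms(1) by blast
qed

lemma killing_commute: "killing br X Y = killing br Y X"
  unfolding killing_def by (rule ltrace_compose_commute[OF linear_ad linear_ad])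

lemma killing_ad_skew: "killing br (br Z X) W = - killing br X (br Z W)"
proof -
  have "linear (\<lambda>V. br X (br W V))"
    using linear_compose[OF linear_ad linear_ad] by (simp add: o_def)
  then have "ltrace (\<lambda>V. br Z (br X (br W V))) = ltrace (\<lambda>V. br X (br W (br Z V)))"
    by (rule ltrace_compose_commute[OF linear_ad])
  moreover have "br (br Z X) V = br Z (br X V) - br X (br Z V)" for V
    using ad_bracket[of Z X V] by simp
  moreover have "br X (br (br Z W) V) = br X (br Z (br W V)) - br X (br W (br Z V))" for V
    using ad_bracket[of Z W V] by (simp add: bracket_simps)
  ultimately show ?thesis unfolding killing_def by (simp add: ltrace_diff)
qed

lemma bilinear_killing: "bilinear (killing br)"
  unfolding bilinear_def
  by (auto intro!: linearI simp: killing_def bracket_simps ltrace_add ltrace_scale)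

lemmas killing_simps = bilinear_ladd[OF bilinear_killing] bilinear_radd[OF bilinear_killing]
  bilinear_lmul[OF bilinear_killing, simplified] bilinear_rmul[OF bilinear_killing, simplified]

end

section \<open>Cartan involutions\<close>

locale cartan = lie br for br :: "'a::euclidean_space \<Rightarrow> 'a \<Rightarrow> 'a" +
  fixes \<theta> :: "'a \<Rightarrow> 'a"
  assumes cartan_involution: "cartan_involution br \<theta>"
begin

lemma linear_theta: "linear \<theta>"
  using cartan_involution
  unfolding cartan_involution_def lie_involution_def lie_automorphism_def by simp

lemma theta_bracket: "\<theta> (br X Y) = br (\<theta> X) (\<theta> Y)"
  using cartan_involution
  unfolding cartan_involution_def lie_involution_def lie_automorphism_def by simp

lemma theta_theta [simp]: "\<theta> (\<theta> X) = X"
  using cartan_involution unfolding cartan_involution_def lie_involution_def by simp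

lemmas theta_simps = linear_add[OF linear_theta] linear_diff[OF linear_theta]
  linear_scale[OF linear_theta] linear_0[OF linear_theta] linear_neg[OF linear_theta]

lemma killing_theta_theta: "killing br (\<theta> X) (\<theta> Y) = killing br X Y"
proof -
  have "linear (\<lambda>U. br X (br Y (\<theta> U)))"
    using linear_compose[OF linear_theta linear_compose[OF linear_ad linear_ad]] by (simp add: o_def)
  then have "ltrace (\<lambda>U. \<theta> (br X (br Y (\<theta> U)))) = ltrace (\<lambda>U. br X (br Y (\<theta> (\<theta> U))))"
    by (rule ltrace_compose_commute[OF linear_theta])
  then show ?thesis unfolding killing_def by (simp add: theta_bracket)
qed

definition B\<theta> :: "'a \<Rightarrow> 'a \<Rightarrow> real" where
  "B\<theta> X Y = - killing br X (\<theta> Y)"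

sublocale B\<theta>: pos_def_form B\<theta>
proof
  show "bilinear B\<theta>"
    unfolding bilinear_def B\<theta>_def by (auto intro!: linearI simp: killing_simps theta_simps)
  show "B\<theta> x y = B\<theta> y x" for x y
    using killing_theta_theta[of y "\<theta> x"] killing_commute unfolding B\<theta>_def by simp
  show "x \<noteq> 0 \<Longrightarrow> B\<theta> x x > 0" for x
    using cartan_involution unfolding cartan_involution_def B\<theta>_def by simp
qed

lemma B\<theta>_ad_skew: "\<theta> Z = Z \<Longrightarrow> B\<theta> (br Z X) W = - B\<theta> X (br Z W)"
  unfolding B\<theta>_def using killing_ad_skew[of Z X "\<theta> W"] by (simp add: theta_bracket)

lemma ad_sq_eigenvalue_nonpos:
  assumes Y: "\<theta> Y = Y" and "x \<noteq> 0" and x: "br Y (br Y x) = c *\<^sub>R x"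
  shows "c \<le> 0"
proof -
  have "c * B\<theta> x x = - B\<theta> (br Y x) (br Y x)"
    using B\<theta>_ad_skew[OF Y, of "br Y x" x] x by (simp add: B\<theta>.form_simps)
  then have "c * B\<theta> x x \<le> 0" using B\<theta>.nonneg by simp
  then show ?thesis using B\<theta>.pos[OF \<open>x \<noteq> 0\<close>] by (simp add: mult_le_0_iff)
qed

lemma noncompact_imp_m_nonzero:
  assumes "\<not> compact_lie br"
  obtains x where "x \<noteq> 0" "\<theta> x = - x"
proof -
  obtain x where "x \<noteq> 0" "killing br x x \<ge> 0"
    using assms unfolding compact_lie_def by (auto simp: not_less)
  moreover have "killing br x (\<theta> x) < 0" using B\<theta>.pos[OF \<open>x \<noteq> 0\<close>] unfolding B\<theta>_def by simp
  ultimately have "\<theta> x \<noteq> x" by auto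
  then have "x - \<theta> x \<noteq> 0" "\<theta> (x - \<theta> x) = - (x - \<theta> x)" by (simp_all add: theta_simps)
  then show thesis by (rule that)
qed

definition m_brackets :: "'a set" where
  "m_brackets = {br a b |a b. \<theta> a = - a \<and> \<theta> b = - b}"

lemma decompose_k_m:
  obtains Yk Ym where "Y = Yk + Ym" "\<theta> Yk = Yk" "\<theta> Ym = - Ym"
proof
  show "Y = (1/2) *\<^sub>R (Y + \<theta> Y) + (1/2) *\<^sub>R (Y - \<theta> Y)"
    by (simp flip: scaleR_add_right)
  show "\<theta> ((1/2) *\<^sub>R (Y + \<theta> Y)) = (1/2) *\<^sub>R (Y + \<theta> Y)"
    by (simp add: theta_simps add.commute)
  show "\<theta> ((1/2) *\<^sub>R (Y - \<theta> Y)) = - ((1/2) *\<^sub>R (Y - \<theta> Y))"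
    by (simp add: theta_simps flip: scaleR_minus_right)
qed

lemma ad_m_plus_m_brackets:
  assumes "X \<in> {x. \<theta> x = - x} \<union> m_brackets"
  shows "br Y X \<in> span ({x. \<theta> x = - x} \<union> m_brackets)"
proof -
  let ?G = "{x. \<theta> x = - x} \<union> m_brackets"
  obtain Yk Ym where Y: "Y = Yk + Ym" "\<theta> Yk = Yk" "\<theta> Ym = - Ym" by (rule decompose_k_m)
  have "br Yk X \<in> span ?G \<and> br Ym X \<in> span ?G"
  proof (cases "\<theta> X = - X")
    case True
    then have "\<theta> (br Yk X) = - br Yk X" "br Ym X \<in> m_brackets"
      using Y unfolding m_brackets_def by (auto simp: theta_bracket bracket_simps)
    then show ?thesis by (auto intro: span_base)
  next
    case False
    with assms obtain a b where X: "X = br a b" "\<theta> a = - a" "\<theta> b = - b"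
      unfolding m_brackets_def by blast
    have "\<theta> (br Ym X) = - br Ym X" using X Y by (simp add: theta_bracket bracket_simps)
    moreover have "br (br Yk a) b \<in> m_brackets" "br a (br Yk b) \<in> m_brackets"
      using X Y unfolding m_brackets_def by (force simp: theta_bracket bracket_simps)+
    moreover have "br Yk X = br (br Yk a) b + br a (br Yk b)" unfolding X by (rule ad_bracket)
    ultimately show ?thesis by (auto intro: span_base span_add)
  qed
  then show ?thesis using Y(1) by (simp add: bracket_simps span_add)
qed

lemma sigma_image_span_m_plus_m_brackets:
  assumes sigma: "lie_involution br \<sigma>" and comm: "\<sigma> \<circ> \<theta> = \<theta> \<circ> \<sigma>"
  shows "\<sigma> ` span ({x. \<theta> x = - x} \<union> m_brackets) \<subseteq> span ({x. \<theta> x = - x} \<union> m_brackets)"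
proof -
  let ?G = "{x. \<theta> x = - x} \<union> m_brackets"
  have \<sigma>: "linear \<sigma>" "\<And>X Y. \<sigma> (br X Y) = br (\<sigma> X) (\<sigma> Y)" "\<And>x. \<theta> (\<sigma> x) = \<sigma> (\<theta> x)"
    using sigma comm unfolding lie_involution_def lie_automorphism_def by (auto simp: fun_eq_iff)
  have "\<sigma> x \<in> ?G" if "x \<in> ?G" for x
  proof (cases "\<theta> x = - x")
    case True
    then show ?thesis using \<sigma> by (simp add: linear_neg)
  next
    case False
    with that obtain a b where "x = br a b" "\<theta> a = - a" "\<theta> b = - b"
      unfolding m_brackets_def by blast
    then have "\<sigma> x = br (\<sigma> a) (\<sigma> b)" "\<theta> (\<sigma> a) = - \<sigma> a" "\<theta> (\<sigma> b) = - \<sigma> b"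
      using \<sigma> by (simp_all add: linear_neg)
    then show ?thesis unfolding m_brackets_def by blast
  qed
  then show ?thesis using linear_image_span_subset[OF \<sigma>(1)] span_superset by blast
qed

lemma k_subset_span_m_brackets:
  assumes sigma: "lie_involution br \<sigma>" and comm: "\<sigma> \<circ> \<theta> = \<theta> \<circ> \<sigma>"
    and noncompact: "\<not> compact_lie br"
    and irred: "\<And>I. lie_ideal br I \<Longrightarrow> \<sigma> ` I \<subseteq> I \<Longrightarrow> I = {0} \<or> I = UNIV"
    and z: "\<theta> z = z"
  shows "z \<in> span m_brackets"
proof -
  let ?G = "{x. \<theta> x = - x} \<union> m_brackets"
  have ideal: "lie_ideal br (span ?G)"
    unfolding lie_ideal_def
    using linear_image_span_subset[OF linear_ad] ad_m_plus_m_brackets by blast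
  have stable: "\<sigma> ` span ?G \<subseteq> span ?G" by (rule sigma_image_span_m_plus_m_brackets[OF sigma comm])
  obtain x where "x \<noteq> 0" "\<theta> x = - x" using noncompact_imp_m_nonzero[OF noncompact] .
  then have "x \<in> span ?G" by (simp add: span_base)
  then have "span ?G \<noteq> {0}" using \<open>x \<noteq> 0\<close> by blast
  then have "span ?G = UNIV" using irred[OF ideal stable] by blast
  then have "z \<in> span ?G" by simp
  then obtain a s where zas: "z = a + s" and a: "a \<in> span {x. \<theta> x = - x}" and s: "s \<in> span m_brackets"
    unfolding span_Un by blast
  have "subspace {x. \<theta> x = - x}" "subspace {x. \<theta> x = x}"
    unfolding subspace_def by (auto simp: theta_simps)
  moreover have "m_brackets \<subseteq> {x. \<theta> x = x}"
    unfolding m_brackets_def by (auto simp: theta_bracket bracket_simps)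
  ultimately have "\<theta> a = - a" "\<theta> s = s" using a s span_minimal by (auto simp: span_eq_iff)
  then have "a = 0" using z unfolding zas by (simp add: theta_simps eq_neg_iff_add_eq_0 flip: scaleR_2)
  then show ?thesis using s zas by simp
qed

end

section \<open>Roots on \<open>t\<^sup>+\<close>\<close>

text \<open>The last assumption, \<open>k = [m, m]\<close>, is where \<open>\<sigma>\<close>-irreducibility and noncompactness
  enter (\<open>k_subset_span_m_brackets\<close>).\<close>
locale t_plus_element = cartan +
  fixes t :: "'a set" and Y :: 'a
  assumes t_abelian: "\<And>Z1 Z2. Z1 \<in> t \<Longrightarrow> Z2 \<in> t \<Longrightarrow> br Z1 Z2 = 0"
    and t_subset_k: "\<And>Z. Z \<in> t \<Longrightarrow> \<theta> Z = Z"
    and Y_in_t_plus: "Y \<in> t_plus br t (eigsp \<theta> (-1))"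
    and k_in_span_m_brackets: "\<And>z. \<theta> z = z \<Longrightarrow> z \<in> span m_brackets"
begin

lemma Y_in_t: "Y \<in> t"
  using Y_in_t_plus unfolding t_plus_def by simp

lemma roots_m_bound: "\<beta> \<in> roots_m br t (eigsp \<theta> (-1)) \<Longrightarrow> \<bar>\<beta> Y\<bar> < pi / 2"
  using Y_in_t_plus unfolding t_plus_def by simp

lemma ad_Y_skew: "B\<theta> (br Y u) v = - B\<theta> u (br Y v)"
  using B\<theta>_ad_skew t_subset_k[OF Y_in_t] by blast

lemma ad_t_commute: "Z \<in> t \<Longrightarrow> Z' \<in> t \<Longrightarrow> br Z (br Z' u) = br Z' (br Z u)"
  using ad_commute t_abelian by blast

lemma ad_t_theta: "Z \<in> t \<Longrightarrow> br Z (\<theta> u) = \<theta> (br Z u)"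
  using t_subset_k by (simp add: theta_bracket)

text \<open>As \<open>ad(Z) ad(Y)\<close> acts on \<open>X1\<close> by a scalar for every \<open>Z \<in> t\<close>, each \<open>ad(Z)\<close> exchanges
  the lines through \<open>X1\<close> and \<open>X2 = [Y, X1]/l\<close>, and \<open>X1 + i X2\<close> is a root vector.\<close>
lemma root_m_from_common_eigenvector:
  assumes X1: "\<theta> X1 = - X1" "X1 \<noteq> 0" and l: "l > 0"
    and X1_Y: "br Y (br Y X1) = (- (l * l)) *\<^sub>R X1"
    and X1_joint: "\<And>Z. Z \<in> t \<Longrightarrow> \<exists>s. br Z (br Y X1) = s *\<^sub>R X1"
  shows "\<exists>\<beta>\<in>roots_m br t (eigsp \<theta> (-1)). \<beta> Y = - l"
proof -
  define X2 where "X2 = (1 / l) *\<^sub>R br Y X1"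
  define \<beta> where "\<beta> Z = B\<theta> (br Z X2) X1 / B\<theta> X1 X1" for Z
  have pos: "B\<theta> X1 X1 > 0" using B\<theta>.pos[OF X1(2)] .
  have t_X2: "br Z X2 = \<beta> Z *\<^sub>R X1" if Z: "Z \<in> t" for Z
  proof -
    obtain s where "br Z (br Y X1) = s *\<^sub>R X1" using X1_joint[OF Z] by blast
    then have "br Z X2 = (s / l) *\<^sub>R X1" unfolding X2_def by (simp add: bracket_simps)
    then show ?thesis unfolding \<beta>_def using pos by (simp add: B\<theta>.form_simps)
  qed
  have Y_X2: "br Y X2 = (- l) *\<^sub>R X1" unfolding X2_def using l by (simp add: bracket_simps X1_Y)
  have t_X1: "br Z X1 = - \<beta> Z *\<^sub>R X2" if "Z \<in> t" for Z
  proof -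
    have "br Z X1 = (- 1 / l) *\<^sub>R br Z (br Y X2)" using l by (simp add: Y_X2 bracket_simps)
    also have "\<dots> = (- 1 / l) *\<^sub>R br Y (br Z X2)" using ad_t_commute[OF that Y_in_t] by simp
    also have "\<dots> = - \<beta> Z *\<^sub>R X2" unfolding t_X2[OF that] unfolding X2_def by (simp add: bracket_simps)
    finally show ?thesis .
  qed
  have "linear \<beta>"
    unfolding \<beta>_def by (rule linearI) (simp_all add: bracket_simps B\<theta>.form_simps add_divide_distrib)
  moreover have "\<beta> Y = - l" unfolding \<beta>_def Y_X2 using pos by (simp add: B\<theta>.form_simps)
  moreover have "\<theta> X2 = - X2"
    unfolding X2_def using X1(1) by (simp add: theta_simps ad_t_theta[OF Y_in_t, symmetric] bracket_simps)
  then have "(X1, X2) \<in> root_space_C br t \<beta> \<inter> eigsp \<theta> (-1) \<times> eigsp \<theta> (-1)"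
    unfolding root_space_C_def eigsp_def using X1 t_X1 t_X2 by auto
  ultimately show ?thesis
    unfolding roots_m_def using Y_in_t l X1(2) by (intro bexI[of _ \<beta>]) force+
qed

lemma self_adjoint_ad_t_ad_Y:
  assumes Z: "Z \<in> t"
  shows "B\<theta>.self_adjoint_on {v. \<theta> v = - v \<and> br Y (br Y v) = c *\<^sub>R v} (\<lambda>v. br Z (br Y v))"
  unfolding B\<theta>.self_adjoint_on_def
proof (intro conjI ballI)
  show "linear (\<lambda>v. br Z (br Y v))" using linear_compose[OF linear_ad linear_ad] by (simp add: o_def)
  show "(\<lambda>v. br Z (br Y v)) ` {v. \<theta> v = - v \<and> br Y (br Y v) = c *\<^sub>R v}
      \<subseteq> {v. \<theta> v = - v \<and> br Y (br Y v) = c *\<^sub>R v}"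
    using ad_t_commute[OF Y_in_t Z] ad_t_theta[OF Y_in_t, symmetric] ad_t_theta[OF Z, symmetric]
    by (auto simp: theta_simps bracket_simps)
  show "B\<theta> (br Z (br Y u)) v = B\<theta> u (br Z (br Y v))" for u v
    using B\<theta>_ad_skew[OF t_subset_k[OF Z], of "br Y u" v] ad_Y_skew[of u "br Z v"]
      ad_t_commute[OF Z Y_in_t] by simp
qed

lemma ad_sq_eigenvalue_on_m:
  assumes x: "\<theta> x = - x" "x \<noteq> 0" "br Y (br Y x) = c *\<^sub>R x"
  obtains l where "0 \<le> l" "l < pi / 2" "c = - (l * l)"
proof -
  have "c \<le> 0" using ad_sq_eigenvalue_nonpos[OF t_subset_k[OF Y_in_t] x(2,3)] .
  define l where "l = sqrt (- c)"
  have l: "0 \<le> l" "c = - (l * l)" unfolding l_def using \<open>c \<le> 0\<close> by simp_all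
  have "l < pi / 2"
  proof (rule ccontr)
    assume "\<not> l < pi / 2"
    then have "l > 0" using pi_gt_zero by linarith
    define E where "E = {v. \<theta> v = - v \<and> br Y (br Y v) = c *\<^sub>R v}"
    define F where "F = (\<lambda>Z v. br Z (br Y v)) ` t"
    have "subspace E"
      unfolding E_def subspace_def by (auto simp: theta_simps bracket_simps scaleR_add_right)
    moreover have "E \<noteq> {0}" using x unfolding E_def by blast
    moreover have "S (T u) = T (S u)" if "S \<in> F" "T \<in> F" for S T u
      using that Y_in_t ad_t_commute unfolding F_def by auto
    moreover have "B\<theta>.self_adjoint_on E S" if "S \<in> F" for S
      using that self_adjoint_ad_t_ad_Y unfolding E_def F_def by blast
    ultimately obtain X1 where X1: "X1 \<in> common_eigenvectors F E" "X1 \<noteq> 0"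
      using B\<theta>.common_eigenvector_exists[of F E] by blast
    then have "\<theta> X1 = - X1" "br Y (br Y X1) = (- (l * l)) *\<^sub>R X1"
      "\<And>Z. Z \<in> t \<Longrightarrow> \<exists>s. br Z (br Y X1) = s *\<^sub>R X1"
      using l unfolding common_eigenvectors_def E_def F_def by auto
    then obtain \<beta> where "\<beta> \<in> roots_m br t (eigsp \<theta> (-1))" "\<beta> Y = - l"
      using root_m_from_common_eigenvector X1(2) \<open>l > 0\<close> by blast
    then show False using roots_m_bound \<open>\<not> l < pi / 2\<close> by fastforce
  qed
  then show thesis using that l by blast
qed

lemma m_subset_span_ad_sq_eigenvectors:
  "{x. \<theta> x = - x} \<subseteq> span (common_eigenvectors {\<lambda>v. br Y (br Y v)} {x. \<theta> x = - x})"
proof (rule B\<theta>.subspace_subset_span_common_eigenvectors)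
  show "subspace {x. \<theta> x = - x}" unfolding subspace_def by (auto simp: theta_simps)
  have "linear (\<lambda>v. br Y (br Y v))" using linear_compose[OF linear_ad linear_ad] by (simp add: o_def)
  moreover have "\<theta> (br Y (br Y v)) = - br Y (br Y v)" if "\<theta> v = - v" for v
    using that by (simp add: ad_t_theta[OF Y_in_t, symmetric] bracket_simps)
  ultimately show "B\<theta>.self_adjoint_on {x. \<theta> x = - x} S" if "S \<in> {\<lambda>v. br Y (br Y v)}" for S
    using that ad_Y_skew unfolding B\<theta>.self_adjoint_on_def by auto
qed auto

lemma B\<theta>_ad_sq_Y: "B\<theta> z (br Y (br Y w)) = B\<theta> (br Y (br Y z)) w"
  using ad_Y_skew by simp

lemma B\<theta>_bracket_ad_sq_eigenvectors_eq_0: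
  assumes b: "pi * pi \<le> b * b" and z: "br Y (br Y z) = (- (b * b)) *\<^sub>R z"
    and x: "x \<in> common_eigenvectors {\<lambda>v. br Y (br Y v)} {x. \<theta> x = - x}"
    and y: "y \<in> common_eigenvectors {\<lambda>v. br Y (br Y v)} {x. \<theta> x = - x}"
  shows "B\<theta> z (br x y) = 0"
proof (cases "x = 0 \<or> y = 0")
  case True
  then show ?thesis by (auto simp: bracket_simps B\<theta>.form_simps)
next
  case False
  obtain cx cy where x': "\<theta> x = - x" "br Y (br Y x) = cx *\<^sub>R x"
    and y': "\<theta> y = - y" "br Y (br Y y) = cy *\<^sub>R y"
    using x y unfolding common_eigenvectors_def by auto
  have "x \<noteq> 0" "y \<noteq> 0" using False by simp_all
  obtain u where u: "0 \<le> u" "u < pi / 2" "cx = - (u * u)"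
    by (rule ad_sq_eigenvalue_on_m[OF x'(1) \<open>x \<noteq> 0\<close> x'(2)])
  obtain v where v: "0 \<le> v" "v < pi / 2" "cy = - (v * v)"
    by (rule ad_sq_eigenvalue_on_m[OF y'(1) \<open>y \<noteq> 0\<close> y'(2)])
  define w where "w = br x y"
  have z_ad_sq: "B\<theta> z (br Y (br Y w')) = - (b * b) * B\<theta> z w'" for w'
    unfolding B\<theta>_ad_sq_Y z by (simp add: B\<theta>.form_simps)
  have "0 = B\<theta> z (br Y (br Y (br Y (br Y w))) + (2 * (u * u + v * v)) *\<^sub>R br Y (br Y w)
      + ((u * u - v * v) * (u * u - v * v)) *\<^sub>R w)"
    unfolding w_def ad_sq_bracket_of_eigenvectors[OF x'(2)[unfolded u(3)] y'(2)[unfolded v(3)]]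
    by (simp add: B\<theta>.form_simps)
  also have "\<dots> = (b * b - (u + v) * (u + v)) * (b * b - (u - v) * (u - v)) * B\<theta> z w"
    by (simp add: B\<theta>.form_simps z_ad_sq algebra_simps)
  finally have "(b * b - (u + v) * (u + v)) * (b * b - (u - v) * (u - v)) * B\<theta> z w = 0" ..
  moreover have "(u + v) * (u + v) < pi * pi" using u v by (intro mult_strict_mono) auto
  moreover have "(u - v) * (u - v) \<le> (u + v) * (u + v)" using u v by (simp add: algebra_simps)
  ultimately show ?thesis unfolding w_def using b by simp
qed

lemma k_ad_sq_eigenvalue_bound:
  assumes z: "\<theta> z = z" "z \<noteq> 0" "br Y (br Y z) = (- (b * b)) *\<^sub>R z"
  shows "\<bar>b\<bar> < pi"
proof (rule ccontr)
  assume "\<not> \<bar>b\<bar> < pi"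
  then have b: "pi * pi \<le> b * b" using mult_mono[of pi "\<bar>b\<bar>" pi "\<bar>b\<bar>"] by simp
  let ?E = "common_eigenvectors {\<lambda>v. br Y (br Y v)} {x. \<theta> x = - x}"
  let ?Q = "{br x y |x y. x \<in> ?E \<and> y \<in> ?E}"
  have "m_brackets \<subseteq> span ?Q"
    unfolding m_brackets_def
    using bracket_in_span_brackets m_subset_span_ad_sq_eigenvectors by blast
  then have "z \<in> span ?Q"
    using k_in_span_m_brackets[OF z(1)] span_minimal[OF _ subspace_span] by blast
  moreover have "B\<theta> z q = 0" if "q \<in> ?Q" for q
    using that B\<theta>_bracket_ad_sq_eigenvectors_eq_0[OF b z(3)] by blast
  moreover have "linear (B\<theta> z)" using B\<theta>.bilinear unfolding bilinear_def by simp
  ultimately have "B\<theta> z z = 0" using linear_eq_0_on_span by blast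
  then show False using B\<theta>.pos[OF z(2)] by simp
qed

lemma root_space_m_part:
  assumes "(X1, X2) \<in> root_space_C br t \<beta>"
  shows "(X1 - \<theta> X1, X2 - \<theta> X2) \<in> root_space_C br t \<beta>"
proof -
  have "br Z (X - \<theta> X) = c *\<^sub>R (X' - \<theta> X')" if "Z \<in> t" "br Z X = c *\<^sub>R X'" for Z X X' c
    using that by (simp add: bracket_simps ad_t_theta theta_simps scaleR_diff_right)
  then show ?thesis using assms unfolding root_space_C_def mem_Collect_eq case_prod_conv by blast
qed

lemma roots_bound:
  assumes "\<beta> \<in> roots br t"
  shows "\<bar>\<beta> Y\<bar> < pi"
proof -
  have "(0, 0) \<in> root_space_C br t \<beta>" unfolding root_space_C_def by (simp add: bracket_simps)
  then obtain X1 X2 where X: "(X1, X2) \<in> root_space_C br t \<beta>" "(X1, X2) \<noteq> (0, 0)"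
    using assms unfolding roots_def by auto
  show ?thesis
  proof (cases "(X1 - \<theta> X1, X2 - \<theta> X2) = (0, 0)")
    case False
    have "(X1 - \<theta> X1, X2 - \<theta> X2) \<in> root_space_C br t \<beta> \<inter> eigsp \<theta> (-1) \<times> eigsp \<theta> (-1)"
      using root_space_m_part[OF X(1)] unfolding eigsp_def by (simp add: theta_simps)
    then have "\<beta> \<in> roots_m br t (eigsp \<theta> (-1))"
      using assms False unfolding roots_def roots_m_def by blast
    then show ?thesis using roots_m_bound[of \<beta>] pi_gt_zero by linarith
  next
    case True
    then have k: "\<theta> X1 = X1" "\<theta> X2 = X2" by simp_all
    have ad: "br Y (br Y X1) = (- (\<beta> Y * \<beta> Y)) *\<^sub>R X1"
      "br Y (br Y X2) = (- (\<beta> Y * \<beta> Y)) *\<^sub>R X2"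
      using X(1) Y_in_t unfolding root_space_C_def by (auto simp: bracket_simps)
    show ?thesis
    proof (cases "X1 = 0")
      case True
      then have "X2 \<noteq> 0" using X(2) by simp
      then show ?thesis by (rule k_ad_sq_eigenvalue_bound[OF k(2) _ ad(2)])
    next
      case False
      then show ?thesis by (rule k_ad_sq_eigenvalue_bound[OF k(1) _ ad(1)])
    qed
  qed
qed

end

theorem lemma1:
  fixes br :: "'a::euclidean_space \<Rightarrow> 'a \<Rightarrow> 'a"
    and \<sigma> \<theta> :: "'a \<Rightarrow> 'a"
    and t :: "'a set"
    and Y :: 'a
  assumes ss: "semisimple br"
    and sig: "lie_involution br \<sigma>"
    and cart: "cartan_involution br \<theta>"
    and comm: "\<sigma> \<circ> \<theta> = \<theta> \<circ> \<sigma>"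
    and noncpt: "\<not> compact_lie br"
    and irred: "\<And>I. lie_ideal br I \<Longrightarrow> \<sigma> ` I \<subseteq> I \<Longrightarrow> I = {0} \<or> I = UNIV"
    and tmax: "max_abelian_in br t (eigsp \<theta> 1 \<inter> eigsp \<sigma> (-1))"
    and Y: "Y \<in> t_plus br t (eigsp \<theta> (-1))"
  shows "\<forall>\<beta>\<in>roots br t. \<bar>\<beta> Y\<bar> < pi"
proof -
  txt \<open>Semisimplicity is used only through the Lie algebra axioms, and of \<open>tmax\<close> only that
    \<open>t\<close> is an abelian subspace of \<open>k\<close>.\<close>
  have "lie_algebra br" using ss unfolding semisimple_def by simp
  then interpret cartan br \<theta> using cart by unfold_locales
  interpret t_plus_element br \<theta> t Y
  proof
    show "br Z1 Z2 = 0" if "Z1 \<in> t" "Z2 \<in> t" for Z1 Z2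
      using tmax that unfolding max_abelian_in_def abelian_sub_def by blast
    show "\<theta> Z = Z" if "Z \<in> t" for Z
      using tmax that unfolding max_abelian_in_def eigsp_def by auto
    show "Y \<in> t_plus br t (eigsp \<theta> (-1))" by (rule Y)
    show "z \<in> span m_brackets" if "\<theta> z = z" for z
      using k_subset_span_m_brackets[OF sig comm noncpt irred that] .
  qed
  show ?thesis using roots_bound by blast
qed

end
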